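(* Let $\mu$ be a computable measure. The set of $\mu$-nilpotent cellular automata is $\Pi_3^0$.
   Context: A CA $F$ over finite alphabet $Q$ has radius $r$, local rule $\delta:Q^{2r+1}\to Q$, global map $F(c)_z=\delta(c_{z-r},\dots,c_{z+r})$. $\mu$ is a shift-invariant Borel probability measure on the configuration space of the CA considered; it is computable if there is a computable $f$ with $|\mu([u]_0)-f(u,\epsilon)|\le\epsilon$ for all words $u$ and rational $\epsilon>0$, where $[u]_0=\{c:c_{[0,|u|-1]}=u\}$. $L_\mu(F)=\{u:\mu(F^{-t}([u]_0))\not\to0\}$. $F$ is $\mu$-nilpotent if $L_\mu(F)=a^*$ for some state $a$ (equivalently its $\mu$-limit set is $\{a^{\mathbb{Z}}\}$). *)

theory Defs
  imports "HOL-Probability.Probability" "HOL-Library.Nat_Bijection"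
begin

datatype rf = Zr | Sc | Proj nat | Comp rf "rf list" | Prim rf rf | Mn rf

inductive rf_eval :: "rf \<Rightarrow> nat list \<Rightarrow> nat \<Rightarrow> bool" where
  zr: "rf_eval Zr xs 0"
| sc: "rf_eval Sc (x # xs) (Suc x)"
| proj: "i < length xs \<Longrightarrow> rf_eval (Proj i) xs (xs ! i)"
| comp: "length ys = length fs \<Longrightarrow> (\<forall>i < length fs. rf_eval (fs ! i) xs (ys ! i))
          \<Longrightarrow> rf_eval g ys y \<Longrightarrow> rf_eval (Comp g fs) xs y"
| prim0: "rf_eval f xs y \<Longrightarrow> rf_eval (Prim f g) (0 # xs) y"
| primS: "rf_eval (Prim f g) (n # xs) y \<Longrightarrow> rf_eval g (n # y # xs) z
          \<Longrightarrow> rf_eval (Prim f g) (Suc n # xs) z"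
| mn: "rf_eval f (n # xs) 0 \<Longrightarrow> (\<forall>m < n. \<exists>k. rf_eval f (m # xs) (Suc k))
          \<Longrightarrow> rf_eval (Mn f) xs n"

definition computable :: "(nat \<Rightarrow> nat) \<Rightarrow> bool" where
  "computable f \<longleftrightarrow> (\<exists>p. \<forall>n. rf_eval p [n] (f n))"

definition decidable4 :: "(nat \<Rightarrow> nat \<Rightarrow> nat \<Rightarrow> nat \<Rightarrow> bool) \<Rightarrow> bool" where
  "decidable4 R \<longleftrightarrow> computable (\<lambda>k. case prod_decode k of (n, k1) \<Rightarrow>
      (case prod_decode k1 of (a, k2) \<Rightarrow> (case prod_decode k2 of (b, c) \<Rightarrow>
         (if R n a b c then 1 else 0))))"

definition Pi3 :: "nat set \<Rightarrow> bool" where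
  "Pi3 A \<longleftrightarrow> (\<exists>R. decidable4 R \<and> (\<forall>n. n \<in> A \<longleftrightarrow> (\<forall>a. \<exists>b. \<forall>c. R n a b c)))"

definition rat_dec :: "nat \<Rightarrow> real" where
  "rat_dec k = (case prod_decode k of (a, b) \<Rightarrow> real_of_int (int_decode a) / real (b + 1))"

definition words :: "nat \<Rightarrow> nat list set" where
  "words q = {u. \<forall>x \<in> set u. x < q}"

definition configs :: "nat \<Rightarrow> (int \<Rightarrow> nat) set" where
  "configs q = {c. \<forall>z. c z < q}"

definition cyl :: "nat \<Rightarrow> nat list \<Rightarrow> int \<Rightarrow> (int \<Rightarrow> nat) set" where
  "cyl q u k = {c \<in> configs q. \<forall>i < length u. c (k + int i) = u ! i}"

text \<open>Borel sigma-algebra of the product topology on Q^Z = sigma-algebra generated by cylinders.\<close>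
definition config_space :: "nat \<Rightarrow> (int \<Rightarrow> nat) measure" where
  "config_space q = sigma (configs q) {cyl q u k | u k. u \<in> words q}"

definition shift :: "(int \<Rightarrow> nat) \<Rightarrow> (int \<Rightarrow> nat)" where
  "shift c = (\<lambda>z. c (z + 1))"

definition shift_invariant_prob :: "nat \<Rightarrow> (int \<Rightarrow> nat) measure \<Rightarrow> bool" where
  "shift_invariant_prob q \<mu> \<longleftrightarrow> sets \<mu> = sets (config_space q) \<and> prob_space \<mu> \<and>
     (\<forall>A \<in> sets \<mu>. measure \<mu> (shift -` A \<inter> space \<mu>) = measure \<mu> A)"

definition computable_measure :: "nat \<Rightarrow> (int \<Rightarrow> nat) measure \<Rightarrow> bool" where
  "computable_measure q \<mu> \<longleftrightarrow> (\<exists>f. computable f \<and>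
     (\<forall>n m. list_decode n \<in> words q \<longrightarrow> rat_dec m > 0 \<longrightarrow>
        \<bar>measure \<mu> (cyl q (list_decode n) 0) - rat_dec (f (prod_encode (n, m)))\<bar> \<le> rat_dec m))"

definition word_index :: "nat \<Rightarrow> nat list \<Rightarrow> nat" where
  "word_index q w = foldl (\<lambda>acc a. acc * q + a) 0 w"

text \<open>A natural number n codes the CA with radius r and rule table t, where (r, m) = prod_decode n
  and t = list_decode m lists delta(w) for all w in Q^(2r+1) in lexicographic order.\<close>
definition ca_radius :: "nat \<Rightarrow> nat" where
  "ca_radius n = fst (prod_decode n)"

definition ca_table :: "nat \<Rightarrow> nat list" where
  "ca_table n = list_decode (snd (prod_decode n))"

definition valid_ca :: "nat \<Rightarrow> nat \<Rightarrow> bool" where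
  "valid_ca q n \<longleftrightarrow> length (ca_table n) = q ^ (2 * ca_radius n + 1) \<and> ca_table n \<in> words q"

definition local_rule :: "nat \<Rightarrow> nat \<Rightarrow> nat list \<Rightarrow> nat" where
  "local_rule q n w = ca_table n ! word_index q w"

definition global_map :: "nat \<Rightarrow> nat \<Rightarrow> (int \<Rightarrow> nat) \<Rightarrow> (int \<Rightarrow> nat)" where
  "global_map q n c = (\<lambda>z. local_rule q n
      (map (\<lambda>i. c (z + i)) [- int (ca_radius n) .. int (ca_radius n)]))"

definition L_mu :: "nat \<Rightarrow> (int \<Rightarrow> nat) measure \<Rightarrow> nat \<Rightarrow> nat list set" where
  "L_mu q \<mu> n = {u \<in> words q. \<not> ((\<lambda>t. measure \<mu> ((global_map q n ^^ t) -` cyl q u 0 \<inter> space \<mu>))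
                                     \<longlonglongrightarrow> 0)}"

definition mu_nilpotent :: "nat \<Rightarrow> (int \<Rightarrow> nat) measure \<Rightarrow> nat \<Rightarrow> bool" where
  "mu_nilpotent q \<mu> n \<longleftrightarrow> (\<exists>a < q. L_mu q \<mu> n = {replicate k a | k. True})"

end

theory Submission
  imports Defs
begin

text \<open>By shift invariance and a union bound over the cells of \<open>[0, k)\<close>, \<open>F\<close> is \<open>\<mu>\<close>-nilpotent iff
  for some state \<open>s\<close> every letter \<open>x \<noteq> s\<close> satisfies \<open>\<mu>(F\<^sup>-\<^sup>t([x]\<^sub>0)) \<rightarrow> 0\<close>. That probability is
  the sum of the measures of those cylinders of length \<open>2rt + 1\<close> whose window \<open>F\<^sup>t\<close> maps to \<open>x\<close>,
  so simulating \<open>F\<close> on all windows and approximating each cylinder measure with precision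
  \<open>1/(8(K + 1)q\<^sup>2\<^sup>r\<^sup>t\<^sup>+\<^sup>1)\<close> yields a decidable test that passes whenever the probability is
  \<open>\<le> 1/(4(K + 1))\<close> and only if it is \<open>< 1/(K + 1)\<close>. Hence \<open>F\<close> is \<open>\<mu>\<close>-nilpotent iff
  \<open>\<forall>K. \<exists>s T. \<forall>t \<ge> T. \<forall>x \<noteq> s.\<close> the test passes; a single \<open>s\<close> serves all \<open>K\<close> by pigeonhole, as
  witnesses for \<open>K\<close> remain witnesses for smaller \<open>K\<close>.\<close>

section \<open>Mu-recursive functions of several arguments\<close>

definition mu_recursive :: "nat \<Rightarrow> (nat list \<Rightarrow> nat) \<Rightarrow> bool" where
  "mu_recursive k f \<longleftrightarrow> (\<exists>p. \<forall>xs. length xs = k \<longrightarrow> rf_eval p xs (f xs))"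

definition mu_recursive_pred :: "nat \<Rightarrow> (nat list \<Rightarrow> bool) \<Rightarrow> bool" where
  "mu_recursive_pred k P \<longleftrightarrow> mu_recursive k (\<lambda>xs. if P xs then 1 else 0)"

lemma mu_recursive_cong:
  "mu_recursive k f \<Longrightarrow> (\<And>xs. length xs = k \<Longrightarrow> f xs = g xs) \<Longrightarrow> mu_recursive k g"
  unfolding mu_recursive_def by metis

lemma mu_recursive_zero: "mu_recursive k (\<lambda>_. 0)"
  unfolding mu_recursive_def by (auto intro: rf_eval.zr)

lemma mu_recursive_proj: "i < k \<Longrightarrow> mu_recursive k (\<lambda>xs. xs ! i)"
  unfolding mu_recursive_def by (auto intro: rf_eval.proj)

lemma mu_recursive_hd: "mu_recursive (Suc k) hd"
  by (rule mu_recursive_cong[OF mu_recursive_proj[of 0]]) (auto simp: length_Suc_conv)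

lemma ex_program_list:
  assumes "\<forall>f\<in>set fs. mu_recursive k f"
  shows "\<exists>ps. length ps = length fs \<and>
    (\<forall>i<length fs. \<forall>xs. length xs = k \<longrightarrow> rf_eval (ps ! i) xs ((fs ! i) xs))"
  using assms
proof (induction fs)
  case (Cons f fs)
  then obtain ps where "length ps = length fs"
    and "\<forall>i<length fs. \<forall>xs. length xs = k \<longrightarrow> rf_eval (ps ! i) xs ((fs ! i) xs)"
    by auto
  moreover obtain p where "\<forall>xs. length xs = k \<longrightarrow> rf_eval p xs (f xs)"
    using Cons.prems unfolding mu_recursive_def by auto
  ultimately show ?case
    by (intro exI[of _ "p # ps"]) (auto simp: nth_Cons split: nat.splits)
qed simp

lemma mu_recursive_comp:
  assumes "mu_recursive m g" "length fs = m" "\<forall>f\<in>set fs. mu_recursive k f"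
  shows "mu_recursive k (\<lambda>xs. g (map (\<lambda>f. f xs) fs))"
proof -
  obtain pg where pg: "\<forall>ys. length ys = m \<longrightarrow> rf_eval pg ys (g ys)"
    using assms(1) unfolding mu_recursive_def by auto
  obtain ps where "length ps = length fs"
    and "\<forall>i<length fs. \<forall>xs. length xs = k \<longrightarrow> rf_eval (ps ! i) xs ((fs ! i) xs)"
    using ex_program_list[OF assms(3)] by auto
  then have "length xs = k \<Longrightarrow> rf_eval (Comp pg ps) xs (g (map (\<lambda>f. f xs) fs))" for xs
    using pg assms(2) by (intro rf_eval.comp[where ys = "map (\<lambda>f. f xs) fs"]) auto
  then show ?thesis
    unfolding mu_recursive_def by blast
qed

lemma mu_recursive_compose1:
  assumes "mu_recursive 1 (\<lambda>ys. h (ys ! 0))" "mu_recursive k f"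
  shows "mu_recursive k (\<lambda>xs. h (f xs))"
  using mu_recursive_comp[OF assms(1), of "[f]"] assms(2) by simp

lemma mu_recursive_compose2:
  assumes "mu_recursive 2 (\<lambda>ys. h (ys ! 0) (ys ! 1))" "mu_recursive k f" "mu_recursive k g"
  shows "mu_recursive k (\<lambda>xs. h (f xs) (g xs))"
  using mu_recursive_comp[OF assms(1), of "[f, g]"] assms(2,3) by simp

lemma mu_recursive_compose3:
  assumes "mu_recursive 3 (\<lambda>ys. h (ys ! 0) (ys ! 1) (ys ! 2))"
    and "mu_recursive k f" "mu_recursive k g" "mu_recursive k l"
  shows "mu_recursive k (\<lambda>xs. h (f xs) (g xs) (l xs))"
  using mu_recursive_comp[OF assms(1), of "[f, g, l]"] assms(2-4) by (simp add: numeral_3_eq_3)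

lemma mu_recursive_compose4:
  assumes "mu_recursive 4 (\<lambda>ys. h (ys ! 0) (ys ! 1) (ys ! 2) (ys ! 3))"
    and "mu_recursive k f" "mu_recursive k g" "mu_recursive k l" "mu_recursive k m"
  shows "mu_recursive k (\<lambda>xs. h (f xs) (g xs) (l xs) (m xs))"
  using mu_recursive_comp[OF assms(1), of "[f, g, l, m]"] assms(2-5) by (simp add: numeral_eq_Suc)

lemma mu_recursive_computable_comp:
  assumes "computable h" "mu_recursive k f"
  shows "mu_recursive k (\<lambda>xs. h (f xs))"
proof (rule mu_recursive_compose1[OF _ assms(2)])
  obtain p where "\<forall>n. rf_eval p [n] (h n)"
    using assms(1) unfolding computable_def by auto
  then show "mu_recursive 1 (\<lambda>ys. h (ys ! 0))"
    unfolding mu_recursive_def by (auto intro!: exI[of _ p] simp: length_Suc_conv)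
qed

lemma mu_recursive_Suc: "mu_recursive k f \<Longrightarrow> mu_recursive k (\<lambda>xs. Suc (f xs))"
  by (rule mu_recursive_compose1[of Suc])
    (auto simp: mu_recursive_def length_Suc_conv intro!: exI[of _ Sc] rf_eval.sc)

lemma mu_recursive_const: "mu_recursive k (\<lambda>_. c)"
  by (induction c) (auto intro: mu_recursive_zero mu_recursive_Suc[of k "\<lambda>_. _", simplified])

lemma mu_recursive_reindex:
  assumes "mu_recursive m g" "\<And>i. i < m \<Longrightarrow> idx i < k"
  shows "mu_recursive k (\<lambda>xs. g (map (\<lambda>i. xs ! idx i) [0..<m]))"
proof -
  have "mu_recursive k (\<lambda>xs. g (map (\<lambda>f. f xs) (map (\<lambda>i xs. xs ! idx i) [0..<m])))"
    using assms by (intro mu_recursive_comp) (auto intro: mu_recursive_proj)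
  then show ?thesis
    by (simp add: o_def)
qed

lemma mu_recursive_Cons_arg:
  assumes "mu_recursive (Suc k) g" "mu_recursive k e"
  shows "mu_recursive k (\<lambda>xs. g (e xs # xs))"
proof -
  have "mu_recursive k (\<lambda>xs. g (map (\<lambda>f. f xs) (e # map (\<lambda>i xs. xs ! i) [0..<k])))"
    using assms by (intro mu_recursive_comp) (auto intro: mu_recursive_proj)
  then show ?thesis
    by (rule mu_recursive_cong) (simp add: o_def, metis map_nth)
qed

lemma mu_recursive_tl_args: "mu_recursive k f \<Longrightarrow> mu_recursive (Suc k) (\<lambda>ys. f (tl ys))"
  by (rule mu_recursive_cong[OF mu_recursive_reindex[where idx = Suc]])
    (auto simp: length_Suc_conv map_nth)

lemma mu_recursive_skip_arg:
  assumes "mu_recursive (Suc k) (\<lambda>ys. h (hd ys) (tl ys))"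
  shows "mu_recursive (Suc (Suc k)) (\<lambda>ws. h (ws ! 0) (drop 2 ws))"
proof (rule mu_recursive_cong[OF mu_recursive_reindex[OF assms,
      where idx = "\<lambda>i. if i = 0 then 0 else Suc i"]])
  fix ws :: "nat list"
  assume "length ws = Suc (Suc k)"
  then have "map (\<lambda>i. ws ! (if i = 0 then 0 else Suc i)) [0..<Suc k] = ws ! 0 # drop 2 ws"
    by (auto intro!: nth_equalityI simp: nth_Cons' simp del: upt_Suc)
  then show "(\<lambda>ys. h (hd ys) (tl ys)) (map (\<lambda>i. ws ! (if i = 0 then 0 else Suc i)) [0..<Suc k])
      = h (ws ! 0) (drop 2 ws)"
    by simp
qed simp

lemma mu_recursive_rec_natI:
  assumes "mu_recursive k f" "mu_recursive k e" "mu_recursive (Suc (Suc k)) H"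
    and "\<And>ws. length ws = Suc (Suc k) \<Longrightarrow> H ws = G (ws ! 0) (ws ! 1) (drop 2 ws)"
    and "\<And>xs. length xs = k \<Longrightarrow> rec_nat (f xs) (\<lambda>n acc. G n acc xs) (e xs) = h xs"
  shows "mu_recursive k h"
proof -
  obtain pf where pf: "\<forall>xs. length xs = k \<longrightarrow> rf_eval pf xs (f xs)"
    using assms(1) unfolding mu_recursive_def by auto
  obtain pH where pH: "\<forall>ws. length ws = Suc (Suc k) \<longrightarrow> rf_eval pH ws (H ws)"
    using assms(3) unfolding mu_recursive_def by auto
  have "rf_eval (Prim pf pH) (n # xs) (rec_nat (f xs) (\<lambda>n acc. G n acc xs) n)"
    if "length xs = k" for n xs
  proof (induction n)
    case 0
    show ?case
      using pf that by (auto intro: rf_eval.prim0)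
  next
    case (Suc n)
    let ?r = "rec_nat (f xs) (\<lambda>n acc. G n acc xs) n"
    have "rf_eval pH (n # ?r # xs) (G n ?r xs)"
      using pH[rule_format, of "n # ?r # xs"] assms(4)[of "n # ?r # xs"] that by simp
    with Suc show ?case
      by (auto intro: rf_eval.primS)
  qed
  then have "mu_recursive (Suc k) (\<lambda>ys. rec_nat (f (tl ys)) (\<lambda>n acc. G n acc (tl ys)) (hd ys))"
    unfolding mu_recursive_def by (auto simp: length_Suc_conv intro!: exI[of _ "Prim pf pH"])
  from mu_recursive_Cons_arg[OF this assms(2)] show ?thesis
    by (rule mu_recursive_cong) (simp add: assms(5))
qed

lemma mu_recursive_LeastI:
  assumes "mu_recursive (Suc k) (\<lambda>ys. f (hd ys) (tl ys))"
    and "\<And>xs. length xs = k \<Longrightarrow> \<exists>n. f n xs = 0"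
  shows "mu_recursive k (\<lambda>xs. LEAST n. f n xs = 0)"
proof -
  obtain p where p: "\<forall>ys. length ys = Suc k \<longrightarrow> rf_eval p ys (f (hd ys) (tl ys))"
    using assms(1) unfolding mu_recursive_def by auto
  have "rf_eval (Mn p) xs (LEAST n. f n xs = 0)" if l: "length xs = k" for xs
  proof -
    define n where "n = (LEAST n. f n xs = 0)"
    have "f n xs = 0"
      unfolding n_def using assms(2)[OF l] by (rule LeastI_ex)
    then have "rf_eval p (n # xs) 0"
      using p l by (metis length_Cons list.sel(1,3))
    moreover have "\<exists>j. rf_eval p (m # xs) (Suc j)" if "m < n" for m
    proof -
      have "f m xs \<noteq> 0"
        using that unfolding n_def by (rule not_less_Least)
      then show ?thesis
        using p l by (metis length_Cons list.sel(1,3) not0_implies_Suc)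
    qed
    ultimately show ?thesis
      unfolding n_def[symmetric] by (blast intro: rf_eval.mn)
  qed
  then show ?thesis
    unfolding mu_recursive_def by blast
qed

lemma rec_nat_Suc_eq_add: "rec_nat b (\<lambda>_ acc. Suc acc) a = a + (b::nat)"
  by (induction a) auto

lemma rec_nat_add_eq_mult: "rec_nat 0 (\<lambda>_ acc. acc + b) a = a * (b::nat)"
  by (induction a) auto

lemma rec_nat_pred: "rec_nat 0 (\<lambda>n _. n) a = a - (1::nat)"
  by (cases a) auto

lemma rec_nat_minus_1_eq_minus: "rec_nat a (\<lambda>_ acc. acc - 1) b = a - (b::nat)"
  by (induction b) auto

lemma rec_nat_mult_eq_power: "rec_nat 1 (\<lambda>_ acc. acc * a) b = (a::nat) ^ b"
  by (induction b) (auto simp: mult_ac)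

lemma mu_recursive_add:
  "mu_recursive k f \<Longrightarrow> mu_recursive k g \<Longrightarrow> mu_recursive k (\<lambda>xs. f xs + g xs)"
  by (rule mu_recursive_compose2, rule mu_recursive_rec_natI[where f = "\<lambda>xs. xs ! 1"
        and e = "\<lambda>xs. xs ! 0" and G = "\<lambda>_ acc _. Suc acc" and H = "\<lambda>ws. Suc (ws ! 1)"])
    (auto intro!: mu_recursive_proj mu_recursive_Suc simp: rec_nat_Suc_eq_add)

lemma mu_recursive_mult:
  "mu_recursive k f \<Longrightarrow> mu_recursive k g \<Longrightarrow> mu_recursive k (\<lambda>xs. f xs * g xs)"
  by (rule mu_recursive_compose2, rule mu_recursive_rec_natI[where f = "\<lambda>_. 0"
        and e = "\<lambda>xs. xs ! 0" and G = "\<lambda>_ acc xs. acc + xs ! 1" and H = "\<lambda>ws. ws ! 1 + ws ! 3"])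
    (auto intro!: mu_recursive_proj mu_recursive_add mu_recursive_zero
      simp: rec_nat_add_eq_mult)

lemma mu_recursive_minus_1: "mu_recursive k f \<Longrightarrow> mu_recursive k (\<lambda>xs. f xs - 1)"
  by (rule mu_recursive_compose1, rule mu_recursive_rec_natI[where f = "\<lambda>_. 0"
        and e = "\<lambda>xs. xs ! 0" and G = "\<lambda>n _ _. n" and H = "\<lambda>ws. ws ! 0"])
    (auto intro!: mu_recursive_proj mu_recursive_zero simp: rec_nat_pred)

lemma mu_recursive_minus:
  "mu_recursive k f \<Longrightarrow> mu_recursive k g \<Longrightarrow> mu_recursive k (\<lambda>xs. f xs - g xs)"
  by (rule mu_recursive_compose2, rule mu_recursive_rec_natI[where f = "\<lambda>xs. xs ! 0"
        and e = "\<lambda>xs. xs ! 1" and G = "\<lambda>_ acc _. acc - 1" and H = "\<lambda>ws. ws ! 1 - 1"])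
    (auto intro!: mu_recursive_proj mu_recursive_minus_1 simp: rec_nat_minus_1_eq_minus
      simp del: One_nat_def)

lemma mu_recursive_power:
  "mu_recursive k f \<Longrightarrow> mu_recursive k g \<Longrightarrow> mu_recursive k (\<lambda>xs. f xs ^ g xs)"
  by (rule mu_recursive_compose2, rule mu_recursive_rec_natI[where f = "\<lambda>_. 1"
        and e = "\<lambda>xs. xs ! 1" and G = "\<lambda>_ acc xs. acc * xs ! 0" and H = "\<lambda>ws. ws ! 1 * ws ! 2"])
    (auto intro!: mu_recursive_proj mu_recursive_mult mu_recursive_const
      simp: rec_nat_mult_eq_power simp del: One_nat_def)

lemma mu_recursive_sumI:
  assumes "mu_recursive (Suc k) H" "\<And>ys. length ys = Suc k \<Longrightarrow> H ys = h (hd ys) (tl ys)"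
    and "mu_recursive k e"
  shows "mu_recursive k (\<lambda>xs. \<Sum>p<e xs. h p xs)"
proof (rule mu_recursive_rec_natI[OF mu_recursive_zero assms(3)])
  have "mu_recursive (Suc k) (\<lambda>ys. h (hd ys) (tl ys))"
    using assms(1) by (rule mu_recursive_cong) (simp add: assms(2))
  then show "mu_recursive (Suc (Suc k)) (\<lambda>ws. ws ! 1 + h (ws ! 0) (drop 2 ws))"
    by (intro mu_recursive_add mu_recursive_proj mu_recursive_skip_arg) simp
  have "rec_nat 0 (\<lambda>n acc. acc + h n xs) m = (\<Sum>p<m. h p xs)" for m xs
    by (induction m) auto
  then show "rec_nat 0 (\<lambda>n acc. acc + h n xs) (e xs) = (\<Sum>p<e xs. h p xs)" for xs
    by simp
qed simp

lemma mu_recursive_pred_le: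
  assumes "mu_recursive k f" "mu_recursive k g"
  shows "mu_recursive_pred k (\<lambda>xs. f xs \<le> g xs)"
  unfolding mu_recursive_pred_def
  by (rule mu_recursive_cong[OF mu_recursive_minus[OF mu_recursive_const[of k 1]
        mu_recursive_minus[OF assms]]]) auto

lemma mu_recursive_pred_less:
  "mu_recursive k f \<Longrightarrow> mu_recursive k g \<Longrightarrow> mu_recursive_pred k (\<lambda>xs. f xs < g xs)"
  using mu_recursive_pred_le[of k "\<lambda>xs. Suc (f xs)" g] mu_recursive_Suc[of k f]
  by (simp add: Suc_le_eq)

lemma mu_recursive_pred_conj:
  assumes "mu_recursive_pred k P" "mu_recursive_pred k Q"
  shows "mu_recursive_pred k (\<lambda>xs. P xs \<and> Q xs)"
  using assms unfolding mu_recursive_pred_def by (rule mu_recursive_cong[OF mu_recursive_mult]) auto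

lemma mu_recursive_pred_not:
  "mu_recursive_pred k P \<Longrightarrow> mu_recursive_pred k (\<lambda>xs. \<not> P xs)"
  unfolding mu_recursive_pred_def
  by (rule mu_recursive_cong[OF mu_recursive_minus[OF mu_recursive_const[of k 1]]]) auto

lemma mu_recursive_pred_disj:
  "mu_recursive_pred k P \<Longrightarrow> mu_recursive_pred k Q \<Longrightarrow> mu_recursive_pred k (\<lambda>xs. P xs \<or> Q xs)"
  using mu_recursive_pred_not[OF mu_recursive_pred_conj[OF mu_recursive_pred_not mu_recursive_pred_not],
      of k P Q]
  by simp

lemma mu_recursive_pred_imp:
  "mu_recursive_pred k P \<Longrightarrow> mu_recursive_pred k Q \<Longrightarrow> mu_recursive_pred k (\<lambda>xs. P xs \<longrightarrow> Q xs)"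
  using mu_recursive_pred_disj[OF mu_recursive_pred_not, of k P Q] by simp

lemma mu_recursive_pred_eq:
  "mu_recursive k f \<Longrightarrow> mu_recursive k g \<Longrightarrow> mu_recursive_pred k (\<lambda>xs. f xs = g xs)"
  using mu_recursive_pred_conj[OF mu_recursive_pred_le mu_recursive_pred_le, of k f g g f]
  by (simp add: eq_iff)

lemma mu_recursive_If:
  assumes "mu_recursive_pred k P" "mu_recursive k f" "mu_recursive k g"
  shows "mu_recursive k (\<lambda>xs. if P xs then f xs else g xs)"
proof -
  have "mu_recursive k (\<lambda>xs. (if P xs then 1 else 0) * f xs + (1 - (if P xs then 1 else 0)) * g xs)"
    using assms unfolding mu_recursive_pred_def
    by (intro mu_recursive_add mu_recursive_mult mu_recursive_minus mu_recursive_const)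
  then show ?thesis
    by (rule mu_recursive_cong) auto
qed

lemma Least_less_mult_Suc_eq_div: "0 < (g::nat) \<Longrightarrow> (LEAST m. f < g * Suc m) = f div g"
proof (rule Least_equality)
  assume g: "0 < g"
  show "f < g * Suc (f div g)"
    using g by (metis add.commute div_mult_mod_eq mod_less_divisor mult.commute mult_Suc_right
        nat_add_left_cancel_less)
  show "\<And>y. f < g * Suc y \<Longrightarrow> f div g \<le> y"
    using g by (metis less_Suc_eq_le less_mult_imp_div_less mult.commute)
qed

lemma mu_recursive_div:
  assumes f: "mu_recursive k f" and g: "mu_recursive k g"
  shows "mu_recursive k (\<lambda>xs. f xs div g xs)"
proof -
  let ?F = "\<lambda>m xs. if g xs = 0 \<or> f xs < g xs * Suc m then 0 else 1 :: nat"
  have "mu_recursive k (\<lambda>xs. LEAST m. ?F m xs = 0)"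
  proof (rule mu_recursive_LeastI)
    show "mu_recursive (Suc k) (\<lambda>ys. ?F (hd ys) (tl ys))"
      using mu_recursive_tl_args[OF f] mu_recursive_tl_args[OF g]
      by (intro mu_recursive_If mu_recursive_pred_disj mu_recursive_pred_eq mu_recursive_pred_less
          mu_recursive_mult mu_recursive_Suc mu_recursive_const mu_recursive_hd)
    show "\<exists>m. ?F m xs = 0" for xs
    proof (cases "g xs = 0")
      case False
      then have "Suc (f xs) \<le> g xs * Suc (f xs)"
        using mult_le_mono1[of 1 "g xs" "Suc (f xs)"] by simp
      then show ?thesis
        by (intro exI[of _ "f xs"]) auto
    qed auto
  qed
  then show ?thesis
  proof (rule mu_recursive_cong)
    show "(LEAST m. ?F m xs = 0) = f xs div g xs" for xs
    proof (cases "g xs = 0")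
      case False
      then have "(LEAST m. ?F m xs = 0) = (LEAST m. f xs < g xs * Suc m)"
        by (intro arg_cong[where f = Least]) (auto simp del: mult_Suc_right)
      then show ?thesis
        using False Least_less_mult_Suc_eq_div[of "g xs" "f xs"] by simp
    qed auto
  qed
qed

lemma mu_recursive_mod:
  assumes "mu_recursive k f" "mu_recursive k g"
  shows "mu_recursive k (\<lambda>xs. f xs mod g xs)"
  by (rule mu_recursive_cong[OF mu_recursive_minus[OF assms(1)
        mu_recursive_mult[OF assms(2) mu_recursive_div[OF assms]]]])
    (simp add: minus_mult_div_eq_mod)

section \<open>Arithmetic codings of pairs and lists\<close>

lemma triangle_mono: "m \<le> n \<Longrightarrow> triangle m \<le> triangle n"
  by (induction n) (auto simp: le_Suc_eq)

lemma mu_recursive_triangle: "mu_recursive k f \<Longrightarrow> mu_recursive k (\<lambda>xs. triangle (f xs))"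
  unfolding triangle_def by (intro mu_recursive_div mu_recursive_mult mu_recursive_Suc mu_recursive_const)

lemma mu_recursive_prod_encode:
  "mu_recursive k f \<Longrightarrow> mu_recursive k g \<Longrightarrow> mu_recursive k (\<lambda>xs. prod_encode (f xs, g xs))"
  unfolding prod_encode_def by (simp, intro mu_recursive_add mu_recursive_triangle)

definition prod_decode_diag :: "nat \<Rightarrow> nat" where
  "prod_decode_diag k = (LEAST s. k < triangle (Suc s))"

lemma prod_decode_diag_eq: "prod_decode_diag k = fst (prod_decode k) + snd (prod_decode k)"
proof -
  obtain a b where ab: "prod_decode k = (a, b)"
    by fastforce
  have k: "k = triangle (a + b) + a"
    using prod_decode_inverse[of k] ab by (simp add: prod_encode_def)
  have "prod_decode_diag k = a + b"
    unfolding prod_decode_diag_def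
  proof (rule Least_equality)
    show "k < triangle (Suc (a + b))"
      using k by simp
    show "a + b \<le> s" if "k < triangle (Suc s)" for s
      using triangle_mono[of "Suc s" "a + b"] that k by (cases "a + b \<le> s") auto
  qed
  then show ?thesis
    using ab by simp
qed

lemma fst_prod_decode_eq: "fst (prod_decode k) = k - triangle (prod_decode_diag k)"
proof -
  obtain a b where ab: "prod_decode k = (a, b)"
    by fastforce
  then have "k = triangle (a + b) + a"
    using prod_decode_inverse[of k] by (simp add: prod_encode_def)
  then show ?thesis
    using ab prod_decode_diag_eq[of k] by simp
qed

lemma mu_recursive_prod_decode_diag:
  assumes f: "mu_recursive k f"
  shows "mu_recursive k (\<lambda>xs. prod_decode_diag (f xs))"
proof -
  let ?F = "\<lambda>s xs. if f xs < triangle (Suc s) then 0 else 1 :: nat"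
  have "mu_recursive k (\<lambda>xs. LEAST s. ?F s xs = 0)"
  proof (rule mu_recursive_LeastI)
    show "mu_recursive (Suc k) (\<lambda>ys. ?F (hd ys) (tl ys))"
      using mu_recursive_tl_args[OF f]
      by (intro mu_recursive_If mu_recursive_pred_less mu_recursive_triangle mu_recursive_Suc
          mu_recursive_hd mu_recursive_const)
    show "\<exists>s. ?F s xs = 0" for xs
      by (intro exI[of _ "f xs"]) (simp add: le_imp_less_Suc)
  qed
  then show ?thesis
    unfolding prod_decode_diag_def by (rule mu_recursive_cong) (auto intro!: arg_cong[where f = Least])
qed

lemma mu_recursive_fst_prod_decode:
  "mu_recursive k f \<Longrightarrow> mu_recursive k (\<lambda>xs. fst (prod_decode (f xs)))"
  unfolding fst_prod_decode_eq
  by (intro mu_recursive_minus mu_recursive_triangle mu_recursive_prod_decode_diag)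

lemma mu_recursive_snd_prod_decode:
  "mu_recursive k f \<Longrightarrow> mu_recursive k (\<lambda>xs. snd (prod_decode (f xs)))"
  using mu_recursive_minus[OF mu_recursive_prod_decode_diag mu_recursive_fst_prod_decode, of k f f]
  by (simp add: prod_decode_diag_eq)

text \<open>Arithmetic counterparts of \<open>hd\<close>, \<open>tl\<close>, \<open>drop\<close>, \<open>nth\<close> and \<open>length\<close> on codes of
  \<open>list_encode\<close>, usable inside \<open>\<mu>\<close>-recursive definitions.\<close>

definition code_hd :: "nat \<Rightarrow> nat" where
  "code_hd c = fst (prod_decode (c - 1))"

definition code_tl :: "nat \<Rightarrow> nat" where
  "code_tl c = snd (prod_decode (c - 1))"

definition code_drop :: "nat \<Rightarrow> nat \<Rightarrow> nat" where
  "code_drop k c = rec_nat c (\<lambda>_ acc. code_tl acc) k"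

definition code_nth :: "nat \<Rightarrow> nat \<Rightarrow> nat" where
  "code_nth c k = code_hd (code_drop k c)"

definition code_length :: "nat \<Rightarrow> nat" where
  "code_length c = (LEAST k. code_drop k c = 0)"

lemma code_drop_simps [simp]: "code_drop 0 c = c" "code_drop (Suc k) c = code_tl (code_drop k c)"
  by (simp_all add: code_drop_def)

lemma list_decode_code_hd_tl: "0 < c \<Longrightarrow> list_decode c = code_hd c # list_decode (code_tl c)"
  by (cases c) (auto simp: code_hd_def code_tl_def split: prod.splits)

lemma code_tl_0: "code_tl 0 = 0"
proof -
  have "prod_decode 0 = (0, 0)"
    using prod_encode_inverse[of "(0, 0)"] by (simp add: prod_encode_def)
  then show ?thesis
    by (simp add: code_tl_def)
qed

lemma list_decode_code_tl: "list_decode (code_tl c) = tl (list_decode c)"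
  by (cases "c = 0") (auto simp: code_tl_0 list_decode_code_hd_tl)

lemma list_decode_code_drop: "list_decode (code_drop k c) = drop k (list_decode c)"
  by (induction k) (auto simp: list_decode_code_tl drop_Suc tl_drop)

lemma list_decode_eq_Nil_iff: "list_decode c = [] \<longleftrightarrow> c = 0"
  by (metis list_decode.simps(1) list_decode_inverse list_encode.simps(1))

lemma code_nth_eq:
  assumes "k < length (list_decode c)"
  shows "code_nth c k = list_decode c ! k"
proof -
  have "list_decode (code_drop k c) \<noteq> []"
    using assms by (simp add: list_decode_code_drop)
  then have "list_decode (code_drop k c) = code_hd (code_drop k c) # list_decode (code_tl (code_drop k c))"
    by (simp add: list_decode_code_hd_tl list_decode_eq_Nil_iff)
  then have "code_hd (code_drop k c) = hd (drop k (list_decode c))"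
    by (simp add: list_decode_code_drop[symmetric])
  then show ?thesis
    using assms by (simp add: code_nth_def hd_drop_conv_nth)
qed

lemma code_length_eq: "code_length c = length (list_decode c)"
  unfolding code_length_def
  by (rule Least_equality)
    (auto simp: list_decode_eq_Nil_iff[symmetric] list_decode_code_drop)

lemma mu_recursive_code_hd: "mu_recursive k f \<Longrightarrow> mu_recursive k (\<lambda>xs. code_hd (f xs))"
  unfolding code_hd_def by (intro mu_recursive_fst_prod_decode mu_recursive_minus mu_recursive_const)

lemma mu_recursive_code_tl: "mu_recursive k f \<Longrightarrow> mu_recursive k (\<lambda>xs. code_tl (f xs))"
  unfolding code_tl_def by (intro mu_recursive_snd_prod_decode mu_recursive_minus mu_recursive_const)

lemma mu_recursive_code_drop:
  "mu_recursive k f \<Longrightarrow> mu_recursive k c \<Longrightarrow> mu_recursive k (\<lambda>xs. code_drop (f xs) (c xs))"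
  unfolding code_drop_def
  by (rule mu_recursive_rec_natI[where G = "\<lambda>_ acc _. code_tl acc" and H = "\<lambda>ws. code_tl (ws ! 1)"])
    (auto intro!: mu_recursive_code_tl mu_recursive_proj)

lemma mu_recursive_code_nth:
  "mu_recursive k c \<Longrightarrow> mu_recursive k f \<Longrightarrow> mu_recursive k (\<lambda>xs. code_nth (c xs) (f xs))"
  unfolding code_nth_def by (intro mu_recursive_code_hd mu_recursive_code_drop)

lemma mu_recursive_code_length:
  assumes c: "mu_recursive k c"
  shows "mu_recursive k (\<lambda>xs. code_length (c xs))"
proof -
  have "mu_recursive k (\<lambda>xs. LEAST n. (if code_drop n (c xs) = 0 then 0 else 1) = (0::nat))"
  proof (rule mu_recursive_LeastI)
    show "mu_recursive (Suc k) (\<lambda>ys. if code_drop (hd ys) (c (tl ys)) = 0 then 0 else 1)"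
      using mu_recursive_tl_args[OF c]
      by (intro mu_recursive_If mu_recursive_pred_eq mu_recursive_code_drop mu_recursive_hd
          mu_recursive_const)
    show "\<exists>n. (if code_drop n (c xs) = 0 then 0 else 1) = (0::nat)" for xs
      using list_decode_code_drop[of "length (list_decode (c xs))" "c xs"]
      by (auto simp: list_decode_eq_Nil_iff)
  qed
  then show ?thesis
    unfolding code_length_def by (rule mu_recursive_cong) (auto intro!: arg_cong[where f = Least])
qed

lemma decidable4I:
  assumes "mu_recursive_pred 4 (\<lambda>xs. R (xs ! 0) (xs ! 1) (xs ! 2) (xs ! 3))"
  shows "decidable4 R"
proof -
  let ?n = "\<lambda>xs. fst (prod_decode (xs ! 0))"
  let ?a = "\<lambda>xs. fst (prod_decode (snd (prod_decode (xs ! 0))))"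
  let ?b = "\<lambda>xs. fst (prod_decode (snd (prod_decode (snd (prod_decode (xs ! 0))))))"
  let ?c = "\<lambda>xs. snd (prod_decode (snd (prod_decode (snd (prod_decode (xs ! 0))))))"
  have "mu_recursive 1 (\<lambda>xs. if R (?n xs) (?a xs) (?b xs) (?c xs) then 1 else 0)"
    using assms unfolding mu_recursive_pred_def
    by (rule mu_recursive_compose4[where h = "\<lambda>n a b c. if R n a b c then 1 else 0"])
      (auto intro!: mu_recursive_fst_prod_decode mu_recursive_snd_prod_decode mu_recursive_proj)
  then obtain p where "\<forall>xs. length xs = 1 \<longrightarrow>
      rf_eval p xs (if R (?n xs) (?a xs) (?b xs) (?c xs) then 1 else 0)"
    unfolding mu_recursive_def by blast
  then have "rf_eval p [k] (case prod_decode k of (n, k1) \<Rightarrow> (case prod_decode k1 of (a, k2) \<Rightarrow>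
      (case prod_decode k2 of (b, c) \<Rightarrow> if R n a b c then 1 else 0)))" for k
    by (metis (no_types, lifting) One_nat_def length_Cons list.size(3) nth_Cons_0 split_beta)
  then show ?thesis
    unfolding decidable4_def computable_def by blast
qed

section \<open>Simulating the automaton on base-\<open>q\<close> codes of windows\<close>

text \<open>\<open>window_code q c z L\<close> reads \<open>c\<^sub>z \<dots> c\<^sub>z\<^sub>+\<^sub>L\<^sub>-\<^sub>1\<close> as a base-\<open>q\<close> numeral, most significant digit
  first; this is the order in which \<open>word_index\<close> enumerates the rule table.\<close>

fun window_code :: "nat \<Rightarrow> (int \<Rightarrow> nat) \<Rightarrow> int \<Rightarrow> nat \<Rightarrow> nat" where
  "window_code q c z 0 = 0"
| "window_code q c z (Suc L) = window_code q c z L * q + c (z + int L)"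

lemma window_code_add:
  "window_code q c z (a + b) = window_code q c z a * q ^ b + window_code q c (z + int a) b"
  by (induction b) (auto simp: algebra_simps)

lemma window_code_less:
  assumes "c \<in> configs q"
  shows "window_code q c z L < q ^ L"
proof (induction L)
  case (Suc L)
  then have "Suc (window_code q c z L) * q \<le> q ^ L * q"
    by (intro mult_le_mono1) simp
  moreover have "c (z + int L) < q"
    using assms by (simp add: configs_def)
  ultimately show ?case
    by (simp add: mult.commute)
qed simp

lemma word_index_eq_window_code:
  "word_index q (map (\<lambda>i. c (y + i)) [a..a + int L - 1]) = window_code q c (y + a) L"
proof (induction L)
  case (Suc L)
  have "[a..a + int (Suc L) - 1] = [a..a + int L - 1] @ [a + int L]"
    using upto_rec2[of a "a + int L"] by simp
  then show ?case
    using Suc by (simp add: word_index_def add.assoc)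
qed (simp add: word_index_def)

lemma global_map_eq_window_code:
  "global_map q n c z = ca_table n ! window_code q c (z - int (ca_radius n)) (2 * ca_radius n + 1)"
  using word_index_eq_window_code[of q c z "- int (ca_radius n)" "2 * ca_radius n + 1"]
  by (simp add: global_map_def local_rule_def)

lemma global_map_configs:
  assumes "valid_ca q n" "c \<in> configs q"
  shows "global_map q n c \<in> configs q"
proof -
  have "ca_table n ! window_code q c z (2 * ca_radius n + 1) \<in> set (ca_table n)" for z
    using window_code_less[OF assms(2), of z "2 * ca_radius n + 1"] assms(1)
    by (intro nth_mem) (simp add: valid_ca_def del: window_code.simps)
  then show ?thesis
    using assms(1)
    by (auto simp: configs_def global_map_eq_window_code valid_ca_def words_def
        simp del: window_code.simps)
qed

lemma funpow_global_map_configs: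
  "valid_ca q n \<Longrightarrow> c \<in> configs q \<Longrightarrow> (global_map q n ^^ t) c \<in> configs q"
  by (induction t) (auto intro: global_map_configs)

text \<open>If \<open>X\<close> codes a window of length \<open>M + 2r\<close>, then \<open>step_code q n M X\<close> codes its image window of
  length \<open>M\<close>. The rule table is read through \<open>code_nth\<close> so that the function is
  \<open>\<mu>\<close>-recursive in the code \<open>n\<close> of the automaton.\<close>

definition step_code :: "nat \<Rightarrow> nat \<Rightarrow> nat \<Rightarrow> nat \<Rightarrow> nat" where
  "step_code q n M X =
    (\<Sum>p<M. code_nth (snd (prod_decode n)) (X div q ^ p mod q ^ (2 * ca_radius n + 1)) * q ^ p)"

lemma step_code_Suc:
  "step_code q n (Suc M) X =
    code_nth (snd (prod_decode n)) (X mod q ^ (2 * ca_radius n + 1)) + q * step_code q n M (X div q)"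
  unfolding step_code_def sum_distrib_left sum.lessThan_Suc_shift
  by (simp add: div_mult2_eq mult_ac)

lemma code_nth_ca_table:
  "valid_ca q n \<Longrightarrow> k < q ^ (2 * ca_radius n + 1) \<Longrightarrow> code_nth (snd (prod_decode n)) k = ca_table n ! k"
  by (simp add: code_nth_eq valid_ca_def ca_table_def)

lemma window_code_global_map:
  assumes v: "valid_ca q n" and c: "c \<in> configs q"
  shows "window_code q (global_map q n c) (z + int (ca_radius n)) M
    = step_code q n M (window_code q c z (M + 2 * ca_radius n))"
proof (induction M)
  case (Suc M)
  let ?r = "ca_radius n"
  let ?X = "window_code q c z (Suc M + 2 * ?r)"
  have "c (z + int (M + 2 * ?r)) < q"
    using c by (simp add: configs_def)
  then have "?X div q = window_code q c z (M + 2 * ?r)"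
    by simp
  moreover have "?X = window_code q c z M * q ^ (2 * ?r + 1) + window_code q c (z + int M) (2 * ?r + 1)"
    using window_code_add[of q c z M "2 * ?r + 1"] by simp
  then have "?X mod q ^ (2 * ?r + 1) = window_code q c (z + int M) (2 * ?r + 1)"
    using window_code_less[OF c, of "z + int M" "2 * ?r + 1"] by (simp del: window_code.simps)
  moreover have "global_map q n c (z + int ?r + int M) = ca_table n ! window_code q c (z + int M) (2 * ?r + 1)"
    by (simp add: global_map_eq_window_code add_ac)
  ultimately show ?case
    using Suc code_nth_ca_table[OF v window_code_less[OF c]]
    by (simp add: step_code_Suc mult.commute)
qed (simp add: step_code_def)

text \<open>After \<open>t\<close> steps a window of length \<open>2rt + 1\<close> has shrunk to the single cell in its centre.\<close>

definition iter_code :: "nat \<Rightarrow> nat \<Rightarrow> nat \<Rightarrow> nat \<Rightarrow> nat" where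
  "iter_code q n t j = rec_nat j (\<lambda>s acc. step_code q n (2 * ca_radius n * (t - Suc s) + 1) acc) t"

lemma window_code_funpow_global_map:
  assumes v: "valid_ca q n" and c: "c \<in> configs q" and "s \<le> t"
  shows "window_code q ((global_map q n ^^ s) c) (z + int (ca_radius n * s)) (2 * ca_radius n * (t - s) + 1)
    = rec_nat (window_code q c z (2 * ca_radius n * t + 1))
        (\<lambda>s acc. step_code q n (2 * ca_radius n * (t - Suc s) + 1) acc) s"
  using \<open>s \<le> t\<close>
proof (induction s)
  case (Suc s)
  let ?r = "ca_radius n"
  have e: "2 * ?r * (t - Suc s) + 1 + 2 * ?r = 2 * ?r * (t - s) + 1"
    using Suc.prems by (simp add: Suc_diff_Suc[symmetric] algebra_simps)
  have z: "z + int (?r * s) + int ?r = z + int (?r * Suc s)"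
    by simp
  have "window_code q (global_map q n ((global_map q n ^^ s) c)) (z + int (?r * Suc s))
        (2 * ?r * (t - Suc s) + 1)
      = step_code q n (2 * ?r * (t - Suc s) + 1)
          (window_code q ((global_map q n ^^ s) c) (z + int (?r * s)) (2 * ?r * (t - s) + 1))"
    using window_code_global_map[OF v funpow_global_map_configs[OF v c, of s],
        of "z + int (?r * s)" "2 * ?r * (t - Suc s) + 1"]
    unfolding e z .
  then show ?case
    using Suc by (simp del: window_code.simps)
qed simp

lemma funpow_global_map_eq_iter_code:
  assumes "valid_ca q n" "c \<in> configs q"
  shows "(global_map q n ^^ t) c (z + int (ca_radius n * t))
    = iter_code q n t (window_code q c z (2 * ca_radius n * t + 1))"
  using window_code_funpow_global_map[OF assms, of t t z] by (simp add: iter_code_def)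

text \<open>The inverse of \<open>window_code\<close> on windows of length \<open>L\<close>.\<close>

definition digits :: "nat \<Rightarrow> nat \<Rightarrow> nat \<Rightarrow> nat list" where
  "digits q L j = map (\<lambda>i. j div q ^ (L - 1 - i) mod q) [0..<L]"

lemma length_digits [simp]: "length (digits q L j) = L"
  by (simp add: digits_def)

lemma digits_in_words: "0 < q \<Longrightarrow> digits q L j \<in> words q"
  by (auto simp: digits_def words_def)

lemma digits_Suc: "digits q (Suc L) j = digits q L (j div q) @ [j mod q]"
proof (rule nth_equalityI)
  fix i
  assume "i < length (digits q (Suc L) j)"
  then have i: "i < Suc L"
    by simp
  show "digits q (Suc L) j ! i = (digits q L (j div q) @ [j mod q]) ! i"
  proof (cases "i < L")
    case True
    then have "q ^ (L - i) = q * q ^ (L - 1 - i)"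
      by (metis Suc_diff_Suc diff_Suc_eq_diff_pred power_Suc)
    then have "j div q ^ (L - i) = j div q div q ^ (L - 1 - i)"
      by (simp add: div_mult2_eq)
    then show ?thesis
      using True unfolding digits_def by (simp add: nth_append del: upt_Suc)
  next
    case False
    then show ?thesis
      using i unfolding digits_def by (simp add: nth_append del: upt_Suc)
  qed
qed simp

lemma digits_Suc_Cons: "digits q (Suc L) j = (j div q ^ L mod q) # digits q L j"
  unfolding digits_def by (auto intro!: nth_equalityI simp: nth_Cons' simp del: upt_Suc)

lemma cyl_append_singleton:
  "c \<in> cyl q (xs @ [d]) z \<longleftrightarrow> c \<in> cyl q xs z \<and> c (z + int (length xs)) = d"
  unfolding cyl_def by (auto simp: nth_append less_Suc_eq)

lemma cyl_digits_iff:
  assumes "0 < q" "j < q ^ L"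
  shows "c \<in> cyl q (digits q L j) z \<longleftrightarrow> c \<in> configs q \<and> window_code q c z L = j"
  using assms(2)
proof (induction L arbitrary: j)
  case (Suc L)
  have IH: "c \<in> cyl q (digits q L (j div q)) z \<longleftrightarrow> c \<in> configs q \<and> window_code q c z L = j div q"
    using Suc assms(1) by (intro Suc.IH) (simp add: div_less_iff_less_mult mult.commute)
  have "window_code q c z L * q + c (z + int L) = j \<longleftrightarrow>
      window_code q c z L = j div q \<and> c (z + int L) = j mod q" if "c \<in> configs q"
    using that assms(1) by (auto simp: configs_def)
  then show ?case
    unfolding digits_Suc cyl_append_singleton IH by (auto simp: cyl_def)
qed (simp add: cyl_def digits_def)

definition digits_code :: "nat \<Rightarrow> nat \<Rightarrow> nat \<Rightarrow> nat" where
  "digits_code q L j = rec_nat 0 (\<lambda>p acc. Suc (prod_encode (j div q ^ p mod q, acc))) L"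

lemma digits_code_eq: "digits_code q L j = list_encode (digits q L j)"
proof (induction L)
  case (Suc L)
  then show ?case
    by (simp only: digits_code_def old.nat.rec(2) digits_Suc_Cons list_encode.simps)
qed (simp add: digits_code_def digits_def)

section \<open>Cylinder measures and preimages of cylinders\<close>

lemma space_eq_configs: "shift_invariant_prob q \<mu> \<Longrightarrow> space \<mu> = configs q"
  unfolding shift_invariant_prob_def
  by (auto dest!: sets_eq_imp_space_eq simp: config_space_def space_measure_of_conv)

lemma shift_invariant_prob_pos:
  assumes "shift_invariant_prob q \<mu>"
  shows "0 < q"
proof -
  have "space \<mu> \<noteq> {}"
    using assms prob_space.not_empty by (auto simp: shift_invariant_prob_def)
  then obtain c where "c \<in> configs q"
    using space_eq_configs[OF assms] by auto
  then show ?thesis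
    by (auto simp: configs_def)
qed

lemma cyl_in_sets:
  assumes "shift_invariant_prob q \<mu>" "u \<in> words q"
  shows "cyl q u k \<in> sets \<mu>"
proof -
  have "{cyl q u k | u k. u \<in> words q} \<subseteq> Pow (configs q)"
    by (auto simp: cyl_def)
  then have "cyl q u k \<in> sets (config_space q)"
    unfolding config_space_def using assms(2) by (intro in_measure_of) auto
  then show ?thesis
    using assms(1) by (simp add: shift_invariant_prob_def)
qed

lemma measure_cyl_shift_invariant:
  assumes "shift_invariant_prob q \<mu>" "u \<in> words q"
  shows "measure \<mu> (cyl q u k) = measure \<mu> (cyl q u 0)"
proof -
  have "shift -` cyl q u i \<inter> space \<mu> = cyl q u (i + 1)" for i
    using space_eq_configs[OF assms(1)] by (auto simp: cyl_def configs_def shift_def add_ac)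
  then have step: "measure \<mu> (cyl q u (i + 1)) = measure \<mu> (cyl q u i)" for i
    using assms cyl_in_sets[OF assms] unfolding shift_invariant_prob_def by metis
  moreover have "measure \<mu> (cyl q u (i - 1)) = measure \<mu> (cyl q u i)" for i
    using step[of "i - 1"] by simp
  ultimately show ?thesis
    by (induction k rule: int_induct[where k = 0]) auto
qed

definition ca_preimage :: "nat \<Rightarrow> nat \<Rightarrow> nat \<Rightarrow> nat list \<Rightarrow> int \<Rightarrow> (int \<Rightarrow> nat) set" where
  "ca_preimage q n t u z = (global_map q n ^^ t) -` cyl q u z \<inter> configs q"

definition preimage_windows :: "nat \<Rightarrow> nat \<Rightarrow> nat \<Rightarrow> nat \<Rightarrow> nat set" where
  "preimage_windows q n t x = {j. j < q ^ (2 * ca_radius n * t + 1) \<and> iter_code q n t j = x}"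

definition letter_prob :: "nat \<Rightarrow> (int \<Rightarrow> nat) measure \<Rightarrow> nat \<Rightarrow> nat \<Rightarrow> nat \<Rightarrow> real" where
  "letter_prob q \<mu> n t x = measure \<mu> (ca_preimage q n t [x] 0)"

lemma ca_preimage_letter:
  assumes v: "valid_ca q n" and q: "0 < q"
  shows "ca_preimage q n t [x] z = (\<Union>j\<in>preimage_windows q n t x.
      cyl q (digits q (2 * ca_radius n * t + 1) j) (z - int (ca_radius n * t)))"
proof -
  let ?L = "2 * ca_radius n * t + 1" and ?z = "z - int (ca_radius n * t)"
  have "c \<in> ca_preimage q n t [x] z \<longleftrightarrow> c \<in> configs q \<and> iter_code q n t (window_code q c ?z ?L) = x"
    for c
  proof (cases "c \<in> configs q")
    case True
    then have "(global_map q n ^^ t) c z = iter_code q n t (window_code q c ?z ?L)"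
      using funpow_global_map_eq_iter_code[OF v True, of t ?z] by simp
    then show ?thesis
      using True funpow_global_map_configs[OF v True, of t]
      by (auto simp: ca_preimage_def cyl_def simp del: window_code.simps)
  qed (simp add: ca_preimage_def)
  moreover have "c \<in> configs q \<Longrightarrow> window_code q c ?z ?L < q ^ ?L" for c
    by (rule window_code_less)
  ultimately show ?thesis
    using cyl_digits_iff[OF q] by (auto simp: preimage_windows_def simp del: window_code.simps)
qed

lemma configs_subset_ca_preimage_replicate_Un:
  assumes v: "valid_ca q n"
  shows "configs q \<subseteq> ca_preimage q n t (replicate k s) 0 \<union>
    (\<Union>(i, x)\<in>{..<k} \<times> {x. x < q \<and> x \<noteq> s}. ca_preimage q n t [x] (int i))"
proof
  fix c
  assume c: "c \<in> configs q"
  let ?x = "\<lambda>i. (global_map q n ^^ t) c (int i)"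
  have Fc: "(global_map q n ^^ t) c \<in> configs q"
    by (rule funpow_global_map_configs[OF v c])
  show "c \<in> ca_preimage q n t (replicate k s) 0 \<union>
      (\<Union>(i, x)\<in>{..<k} \<times> {x. x < q \<and> x \<noteq> s}. ca_preimage q n t [x] (int i))"
  proof (cases "c \<in> ca_preimage q n t (replicate k s) 0")
    case False
    then obtain i where "i < k" "?x i \<noteq> s"
      using c Fc by (auto simp: ca_preimage_def cyl_def)
    moreover have "?x i < q" "c \<in> ca_preimage q n t [?x i] (int i)"
      using c Fc by (auto simp: ca_preimage_def cyl_def configs_def)
    ultimately show ?thesis
      by blast
  qed simp
qed

context
  fixes q n :: nat and \<mu> :: "(int \<Rightarrow> nat) measure"
  assumes si: "shift_invariant_prob q \<mu>" and v: "valid_ca q n"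
begin

lemma ca_preimage_letter_in_sets: "ca_preimage q n t [x] z \<in> sets \<mu>"
  unfolding ca_preimage_letter[OF v shift_invariant_prob_pos[OF si]]
  by (intro sets.finite_UN cyl_in_sets[OF si] digits_in_words shift_invariant_prob_pos[OF si])
    (simp_all add: preimage_windows_def)

lemma measure_ca_preimage_letter:
  "measure \<mu> (ca_preimage q n t [x] z)
    = (\<Sum>j\<in>preimage_windows q n t x. measure \<mu> (cyl q (digits q (2 * ca_radius n * t + 1) j) 0))"
proof -
  interpret prob_space \<mu>
    using si by (simp add: shift_invariant_prob_def)
  have q: "0 < q"
    by (rule shift_invariant_prob_pos[OF si])
  let ?A = "\<lambda>j. cyl q (digits q (2 * ca_radius n * t + 1) j) (z - int (ca_radius n * t))"
  have "finite (preimage_windows q n t x)"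
    by (simp add: preimage_windows_def)
  moreover have "?A ` preimage_windows q n t x \<subseteq> sets \<mu>"
    using cyl_in_sets[OF si digits_in_words[OF q]] by auto
  moreover have "disjoint_family_on ?A (preimage_windows q n t x)"
    unfolding disjoint_family_on_def using cyl_digits_iff[OF q] by (auto simp: preimage_windows_def)
  ultimately have "measure \<mu> (ca_preimage q n t [x] z) = (\<Sum>j\<in>preimage_windows q n t x. measure \<mu> (?A j))"
    unfolding ca_preimage_letter[OF v q] by (intro measure_finite_Union) auto
  also have "\<dots> = (\<Sum>j\<in>preimage_windows q n t x. measure \<mu> (cyl q (digits q (2 * ca_radius n * t + 1) j) 0))"
    by (intro sum.cong refl measure_cyl_shift_invariant[OF si digits_in_words[OF q]])
  finally show ?thesis .
qed

lemma measure_ca_preimage_letter_eq_letter_prob: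
  "measure \<mu> (ca_preimage q n t [x] z) = letter_prob q \<mu> n t x"
  unfolding letter_prob_def measure_ca_preimage_letter ..

lemma ca_preimage_word:
  "u \<in> words q \<Longrightarrow> ca_preimage q n t u z = configs q \<inter> (\<Inter>i<length u. ca_preimage q n t [u ! i] (z + int i))"
  using funpow_global_map_configs[OF v] by (auto simp: ca_preimage_def cyl_def)

lemma ca_preimage_in_sets:
  assumes "u \<in> words q"
  shows "ca_preimage q n t u z \<in> sets \<mu>"
proof -
  have "configs q \<in> sets \<mu>"
    using space_eq_configs[OF si] sets.top by metis
  then show ?thesis
    unfolding ca_preimage_word[OF assms]
    by (cases "u = []") (auto intro!: sets.Int sets.finite_INT ca_preimage_letter_in_sets)
qed

lemma L_mu_eq: "L_mu q \<mu> n = {u \<in> words q. \<not> (\<lambda>t. measure \<mu> (ca_preimage q n t u 0)) \<longlonglongrightarrow> 0}"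
  unfolding L_mu_def ca_preimage_def space_eq_configs[OF si] ..

lemma L_mu_subset_replicate:
  assumes lim: "\<And>x. x < q \<Longrightarrow> x \<noteq> s \<Longrightarrow> (\<lambda>t. letter_prob q \<mu> n t x) \<longlonglongrightarrow> 0"
    and "u \<in> L_mu q \<mu> n"
  shows "u = replicate (length u) s"
proof (rule ccontr)
  interpret prob_space \<mu>
    using si by (simp add: shift_invariant_prob_def)
  have u: "u \<in> words q" and not_lim: "\<not> (\<lambda>t. measure \<mu> (ca_preimage q n t u 0)) \<longlonglongrightarrow> 0"
    using assms(2) unfolding L_mu_eq by auto
  assume "u \<noteq> replicate (length u) s"
  then obtain i where i: "i < length u" "u ! i \<noteq> s"
    by (metis (mono_tags, lifting) length_replicate nth_equalityI nth_replicate)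
  have le: "measure \<mu> (ca_preimage q n t u 0) \<le> letter_prob q \<mu> n t (u ! i)" for t
  proof -
    have "ca_preimage q n t u 0 \<subseteq> ca_preimage q n t [u ! i] (int i)"
      using ca_preimage_word[OF u, of t 0] i(1) by auto
    then have "measure \<mu> (ca_preimage q n t u 0) \<le> measure \<mu> (ca_preimage q n t [u ! i] (int i))"
      by (intro finite_measure_mono ca_preimage_letter_in_sets)
    then show ?thesis
      by (simp add: measure_ca_preimage_letter_eq_letter_prob)
  qed
  have "u ! i < q"
    using u i(1) by (auto simp: words_def)
  then have letter_lim: "(\<lambda>t. letter_prob q \<mu> n t (u ! i)) \<longlonglongrightarrow> 0"
    using i(2) by (rule lim)
  have "(\<lambda>t. measure \<mu> (ca_preimage q n t u 0)) \<longlonglongrightarrow> 0"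
    by (rule tendsto_sandwich[OF always_eventually always_eventually tendsto_const letter_lim])
      (simp_all add: le)
  with not_lim show False ..
qed

lemma measure_ca_preimage_replicate_ge:
  assumes "s < q"
  shows "1 \<le> measure \<mu> (ca_preimage q n t (replicate k s) 0)
    + (\<Sum>(i, x)\<in>{..<k} \<times> {x. x < q \<and> x \<noteq> s}. letter_prob q \<mu> n t x)"
proof -
  interpret prob_space \<mu>
    using si by (simp add: shift_invariant_prob_def)
  let ?P = "ca_preimage q n t (replicate k s) 0" and ?I = "{..<k} \<times> {x. x < q \<and> x \<noteq> s}"
  let ?A = "\<lambda>(i, x). ca_preimage q n t [x] (int i)"
  have P: "?P \<in> sets \<mu>"
    using assms by (intro ca_preimage_in_sets) (simp add: words_def)
  have A: "?A ` ?I \<subseteq> sets \<mu>" and fin: "finite ?I"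
    using ca_preimage_letter_in_sets by auto
  have "1 = measure \<mu> (configs q)"
    using prob_space space_eq_configs[OF si] by simp
  also have "\<dots> \<le> measure \<mu> (?P \<union> (\<Union>p\<in>?I. ?A p))"
    using configs_subset_ca_preimage_replicate_Un[OF v] P A fin by (intro finite_measure_mono) auto
  also have "\<dots> \<le> measure \<mu> ?P + measure \<mu> (\<Union>p\<in>?I. ?A p)"
    using P A fin by (intro measure_Un_le) auto
  also have "\<dots> \<le> measure \<mu> ?P + (\<Sum>p\<in>?I. measure \<mu> (?A p))"
    using finite_measure_subadditive_finite[OF fin A] by simp
  also have "(\<Sum>p\<in>?I. measure \<mu> (?A p)) = (\<Sum>(i, x)\<in>?I. letter_prob q \<mu> n t x)"
    by (intro sum.cong) (auto simp: measure_ca_preimage_letter_eq_letter_prob)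
  finally show ?thesis .
qed

lemma replicate_in_L_mu:
  assumes lim: "\<And>x. x < q \<Longrightarrow> x \<noteq> s \<Longrightarrow> (\<lambda>t. letter_prob q \<mu> n t x) \<longlonglongrightarrow> 0" and "s < q"
  shows "replicate k s \<in> L_mu q \<mu> n"
proof -
  let ?m = "\<lambda>t. measure \<mu> (ca_preimage q n t (replicate k s) 0)"
    and ?e = "\<lambda>t. \<Sum>(i, x)\<in>{..<k} \<times> {x. x < q \<and> x \<noteq> s}. letter_prob q \<mu> n t x"
  have "?e \<longlonglongrightarrow> 0"
    using lim by (intro tendsto_null_sum) auto
  have "\<not> ?m \<longlonglongrightarrow> 0"
  proof
    assume "?m \<longlonglongrightarrow> 0"
    with \<open>?e \<longlonglongrightarrow> 0\<close> have "(\<lambda>t. ?m t + ?e t) \<longlonglongrightarrow> 0 + 0"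
      by (intro tendsto_add)
    then have "1 \<le> (0::real)"
      using measure_ca_preimage_replicate_ge[OF \<open>s < q\<close>] by (intro LIMSEQ_le_const) auto
    then show False
      by simp
  qed
  then show ?thesis
    unfolding L_mu_eq using \<open>s < q\<close> by (simp add: words_def)
qed

lemma mu_nilpotent_iff_letters_vanish:
  "mu_nilpotent q \<mu> n \<longleftrightarrow> (\<exists>s<q. \<forall>x<q. x \<noteq> s \<longrightarrow> (\<lambda>t. letter_prob q \<mu> n t x) \<longlonglongrightarrow> 0)"
proof
  assume "mu_nilpotent q \<mu> n"
  then obtain s where s: "s < q" "L_mu q \<mu> n = {replicate k s | k. True}"
    by (auto simp: mu_nilpotent_def)
  have "(\<lambda>t. letter_prob q \<mu> n t x) \<longlonglongrightarrow> 0" if "x < q" "x \<noteq> s" for x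
  proof -
    have "[x] \<notin> L_mu q \<mu> n"
      using s(2) that(2) by (auto simp: Cons_replicate_eq)
    then show ?thesis
      using that(1) unfolding L_mu_eq letter_prob_def by (auto simp: words_def)
  qed
  with s(1) show "\<exists>s<q. \<forall>x<q. x \<noteq> s \<longrightarrow> (\<lambda>t. letter_prob q \<mu> n t x) \<longlonglongrightarrow> 0"
    by blast
next
  assume "\<exists>s<q. \<forall>x<q. x \<noteq> s \<longrightarrow> (\<lambda>t. letter_prob q \<mu> n t x) \<longlonglongrightarrow> 0"
  then obtain s where "s < q" and "\<And>x. x < q \<Longrightarrow> x \<noteq> s \<Longrightarrow> (\<lambda>t. letter_prob q \<mu> n t x) \<longlonglongrightarrow> 0"
    by auto
  then have "L_mu q \<mu> n = {replicate k s | k. True}"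
    using L_mu_subset_replicate replicate_in_L_mu by blast
  with \<open>s < q\<close> show "mu_nilpotent q \<mu> n"
    by (auto simp: mu_nilpotent_def)
qed

end

section \<open>A decidable test for small letter probabilities\<close>

definition cyl_approximation :: "nat \<Rightarrow> (int \<Rightarrow> nat) measure \<Rightarrow> (nat \<Rightarrow> nat) \<Rightarrow> bool" where
  "cyl_approximation q \<mu> f \<longleftrightarrow> (\<forall>n m. list_decode n \<in> words q \<longrightarrow> rat_dec m > 0 \<longrightarrow>
     \<bar>measure \<mu> (cyl q (list_decode n) 0) - rat_dec (f (prod_encode (n, m)))\<bar> \<le> rat_dec m)"

lemma int_decode_even: "even a \<Longrightarrow> int_decode a = int (a div 2)"
  by (simp add: int_decode_def sum_decode_def)

lemma int_decode_odd: "odd a \<Longrightarrow> int_decode a < 0"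
  by (simp add: int_decode_def sum_decode_def)

lemma rat_dec_inverse: "0 < N \<Longrightarrow> rat_dec (prod_encode (2, N - 1)) = 1 / real N"
  by (simp add: rat_dec_def int_decode_even)

text \<open>\<open>scaled_floor N v = \<lfloor>N \<cdot> rat_dec v\<rfloor>\<close> when \<open>rat_dec v \<ge> 0\<close>, and \<open>0\<close> otherwise.\<close>

definition scaled_floor :: "nat \<Rightarrow> nat \<Rightarrow> nat" where
  "scaled_floor N v = (if fst (prod_decode v) mod 2 = 0
      then N * (fst (prod_decode v) div 2) div (snd (prod_decode v) + 1) else 0)"

lemma scaled_floor_approx:
  fixes m :: real
  assumes N: "0 < N" and m: "0 \<le> m" and approx: "\<bar>m - rat_dec v\<bar> \<le> 1 / real N"
  shows "\<bar>real (scaled_floor N v) - real N * m\<bar> \<le> 2"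
proof -
  obtain a b where ab: "prod_decode v = (a, b)"
    by fastforce
  have "\<bar>real N * m - real N * rat_dec v\<bar> = real N * \<bar>m - rat_dec v\<bar>"
    by (simp add: abs_mult right_diff_distrib[symmetric])
  also have "\<dots> \<le> 1"
    using approx N by (simp add: field_simps)
  finally have Nm: "\<bar>real N * m - real N * rat_dec v\<bar> \<le> 1" .
  show ?thesis
  proof (cases "even a")
    case True
    let ?x = "real (N * (a div 2)) / real (b + 1)"
    have "a mod 2 = 0"
      using True by presburger
    moreover have "of_int \<lfloor>?x\<rfloor> = real (N * (a div 2) div (b + 1))"
      unfolding floor_divide_of_nat_eq by simp
    ultimately have "real (scaled_floor N v) = of_int \<lfloor>?x\<rfloor>"
      using ab by (simp add: scaled_floor_def)
    moreover have "real N * rat_dec v = ?x"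
      using True ab by (simp add: rat_dec_def int_decode_even)
    ultimately show ?thesis
      using Nm of_int_floor_le[of ?x] real_of_int_floor_add_one_gt[of ?x] by linarith
  next
    case False
    then have "a mod 2 \<noteq> 0"
      by presburger
    then have "scaled_floor N v = 0"
      using ab by (simp add: scaled_floor_def)
    moreover have "real N * rat_dec v < 0"
      using False ab N int_decode_odd by (simp add: rat_dec_def divide_neg_pos mult_pos_neg)
    ultimately show ?thesis
      using Nm m by (simp add: abs_le_iff)
  qed
qed

text \<open>The approximation scale \<open>N = 8(K + 1)q\<^sup>L\<close>, where \<open>L = 2rt + 1\<close> is the length of the windows
  deciding the letter at time \<open>t\<close>: each of the at most \<open>q\<^sup>L\<close> cylinders contributes an error of at
  most \<open>2\<close> to \<open>N\<close> times the letter probability.\<close>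

definition test_scale :: "nat \<Rightarrow> nat \<Rightarrow> nat \<Rightarrow> nat \<Rightarrow> nat" where
  "test_scale q n t K = 8 * (K + 1) * q ^ (2 * ca_radius n * t + 1)"

text \<open>The pair \<open>(2, N - 1)\<close> codes the precision \<open>1/N\<close>, see \<open>rat_dec_inverse\<close>.\<close>

definition cyl_approx :: "nat \<Rightarrow> (nat \<Rightarrow> nat) \<Rightarrow> nat \<Rightarrow> nat \<Rightarrow> nat \<Rightarrow> nat \<Rightarrow> nat" where
  "cyl_approx q f n t K j =
    f (prod_encode (digits_code q (2 * ca_radius n * t + 1) j, prod_encode (2, test_scale q n t K - 1)))"

definition preimage_approx :: "nat \<Rightarrow> (nat \<Rightarrow> nat) \<Rightarrow> nat \<Rightarrow> nat \<Rightarrow> nat \<Rightarrow> nat \<Rightarrow> nat" where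
  "preimage_approx q f n t x K = (\<Sum>j<q ^ (2 * ca_radius n * t + 1).
      if iter_code q n t j = x then scaled_floor (test_scale q n t K) (cyl_approx q f n t K j) else 0)"

definition small_letter_test :: "nat \<Rightarrow> (nat \<Rightarrow> nat) \<Rightarrow> nat \<Rightarrow> nat \<Rightarrow> nat \<Rightarrow> nat \<Rightarrow> bool" where
  "small_letter_test q f n t x K \<longleftrightarrow> 2 * (K + 1) * preimage_approx q f n t x K \<le> test_scale q n t K"

context
  fixes q n :: nat and \<mu> :: "(int \<Rightarrow> nat) measure" and f :: "nat \<Rightarrow> nat"
  assumes si: "shift_invariant_prob q \<mu>" and v: "valid_ca q n" and f: "cyl_approximation q \<mu> f"
begin

lemma cyl_approx_error:
  "\<bar>real (scaled_floor (test_scale q n t K) (cyl_approx q f n t K j))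
      - real (test_scale q n t K) * measure \<mu> (cyl q (digits q (2 * ca_radius n * t + 1) j) 0)\<bar> \<le> 2"
proof (rule scaled_floor_approx[OF _ measure_nonneg])
  let ?L = "2 * ca_radius n * t + 1" and ?N = "test_scale q n t K"
  have q: "0 < q"
    by (rule shift_invariant_prob_pos[OF si])
  then show N: "0 < ?N"
    by (simp add: test_scale_def)
  have "list_decode (digits_code q ?L j) = digits q ?L j"
    by (simp add: digits_code_eq)
  then show "\<bar>measure \<mu> (cyl q (digits q ?L j) 0) - rat_dec (cyl_approx q f n t K j)\<bar> \<le> 1 / real ?N"
    using f[unfolded cyl_approximation_def, rule_format, of "digits_code q ?L j" "prod_encode (2, ?N - 1)"]
      digits_in_words[OF q] rat_dec_inverse[OF N] N
    by (simp add: cyl_approx_def)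
qed

lemma preimage_approx_error:
  "\<bar>real (preimage_approx q f n t x K) - real (test_scale q n t K) * letter_prob q \<mu> n t x\<bar>
    \<le> 2 * real q ^ (2 * ca_radius n * t + 1)"
proof -
  let ?L = "2 * ca_radius n * t + 1" and ?N = "test_scale q n t K" and ?J = "preimage_windows q n t x"
  let ?m = "\<lambda>j. measure \<mu> (cyl q (digits q ?L j) 0)"
  let ?g = "\<lambda>j. scaled_floor ?N (cyl_approx q f n t K j)"
  have J: "?J = {j \<in> {..<q ^ ?L}. iter_code q n t j = x}"
    by (auto simp: preimage_windows_def)
  have S: "preimage_approx q f n t x K = (\<Sum>j\<in>?J. ?g j)"
    unfolding preimage_approx_def J by (subst sum.inter_filter) auto
  have A: "letter_prob q \<mu> n t x = (\<Sum>j\<in>?J. ?m j)"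
    unfolding letter_prob_def by (rule measure_ca_preimage_letter[OF si v])
  have "\<bar>real (preimage_approx q f n t x K) - real ?N * letter_prob q \<mu> n t x\<bar>
      = \<bar>\<Sum>j\<in>?J. real (?g j) - real ?N * ?m j\<bar>"
    unfolding S A by (simp add: sum_subtractf sum_distrib_left)
  also have "\<dots> \<le> (\<Sum>j\<in>?J. \<bar>real (?g j) - real ?N * ?m j\<bar>)"
    by (rule sum_abs)
  also have "\<dots> \<le> (\<Sum>j\<in>?J. 2)"
    by (intro sum_mono cyl_approx_error)
  also have "\<dots> = 2 * real (card ?J)"
    by simp
  also have "\<dots> \<le> 2 * real q ^ ?L"
  proof -
    have "card ?J \<le> q ^ ?L"
      using card_mono[of "{..<q ^ ?L}" ?J] J by auto
    then have "real (card ?J) \<le> real q ^ ?L"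
      by (metis of_nat_le_iff of_nat_power)
    then show ?thesis
      by simp
  qed
  finally show ?thesis .
qed

lemma small_letter_test_sound:
  assumes "small_letter_test q f n t x K"
  shows "letter_prob q \<mu> n t x < 1 / real (K + 1)"
proof -
  let ?Q = "real q ^ (2 * ca_radius n * t + 1)" and ?a = "letter_prob q \<mu> n t x"
    and ?S = "real (preimage_approx q f n t x K)" and ?k = "real (K + 1)"
  have Q: "0 < ?Q"
    using shift_invariant_prob_pos[OF si] by simp
  have N: "real (test_scale q n t K) = 8 * ?k * ?Q"
    by (simp add: test_scale_def)
  have "real (2 * (K + 1) * preimage_approx q f n t x K) \<le> real (test_scale q n t K)"
    using assms unfolding small_letter_test_def by (simp only: of_nat_le_iff)
  then have test: "2 * ?k * ?S \<le> 8 * ?k * ?Q"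
    by (simp only: N of_nat_mult of_nat_numeral)
  have "8 * ?k * ?Q * ?a \<le> ?S + 2 * ?Q"
    using preimage_approx_error[of t x K] unfolding N by linarith
  then have "2 * ?k * (8 * ?k * ?Q * ?a) \<le> 2 * ?k * (?S + 2 * ?Q)"
    by (intro mult_left_mono) auto
  also have "\<dots> \<le> 4 * ?k * ?Q * 3"
    using test by (simp add: algebra_simps)
  finally have "4 * ?k * ?Q * (4 * ?k * ?a) \<le> 4 * ?k * ?Q * 3"
    by (simp add: algebra_simps)
  moreover have "0 < 4 * ?k * ?Q"
    using Q by simp
  ultimately have "4 * ?k * ?a \<le> 3"
    using mult_le_cancel_left_pos by blast
  then have "?k * ?a < 1"
    by linarith
  then show ?thesis
    by (simp add: field_simps)
qed

lemma small_letter_test_complete: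
  assumes "letter_prob q \<mu> n t x \<le> 1 / (4 * real (K + 1))"
  shows "small_letter_test q f n t x K"
proof -
  let ?Q = "real q ^ (2 * ca_radius n * t + 1)" and ?a = "letter_prob q \<mu> n t x"
    and ?S = "real (preimage_approx q f n t x K)" and ?k = "real (K + 1)"
  have N: "real (test_scale q n t K) = 8 * ?k * ?Q"
    by (simp add: test_scale_def)
  have "?S \<le> 8 * ?k * ?Q * ?a + 2 * ?Q"
    using preimage_approx_error[of t x K] unfolding N by linarith
  then have "2 * ?k * ?S \<le> 2 * ?k * (8 * ?k * ?Q * ?a + 2 * ?Q)"
    by (intro mult_left_mono) auto
  also have "\<dots> = 4 * ?k * ?Q * (4 * ?k * ?a) + 4 * ?k * ?Q"
    by (simp add: algebra_simps)
  also have "\<dots> \<le> 4 * ?k * ?Q * 1 + 4 * ?k * ?Q"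
    using assms by (intro add_right_mono mult_left_mono) (auto simp: field_simps)
  finally have "real (2 * (K + 1) * preimage_approx q f n t x K) \<le> real (test_scale q n t K)"
    by (simp only: N of_nat_mult of_nat_numeral)
  then show ?thesis
    unfolding small_letter_test_def by (simp only: of_nat_le_iff)
qed

end

section \<open>The \<open>\<Pi>\<^sub>3\<close> characterisation\<close>

text \<open>Read \<open>\<forall>K. \<exists>s T. \<forall>t x i. nilpotency_cond q f n K s T t x i\<close>: the index \<open>i\<close> checks the rule
  table entry by entry, and for precision \<open>1/(K + 1)\<close> the state \<open>s\<close> and time \<open>T\<close> witness that
  every other letter \<open>x\<close> passes the test at all times \<open>t \<ge> T\<close>.\<close>

definition nilpotency_cond ::
    "nat \<Rightarrow> (nat \<Rightarrow> nat) \<Rightarrow> nat \<Rightarrow> nat \<Rightarrow> nat \<Rightarrow> nat \<Rightarrow> nat \<Rightarrow> nat \<Rightarrow> nat \<Rightarrow> bool" where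
  "nilpotency_cond q f n K s T t x i \<longleftrightarrow>
    code_length (snd (prod_decode n)) = q ^ (2 * ca_radius n + 1) \<and>
    (i < code_length (snd (prod_decode n)) \<longrightarrow> code_nth (snd (prod_decode n)) i < q) \<and>
    s < q \<and>
    (T \<le> t \<and> x < q \<and> x \<noteq> s \<longrightarrow> small_letter_test q f n t x K)"

definition nilpotency_rel :: "nat \<Rightarrow> (nat \<Rightarrow> nat) \<Rightarrow> nat \<Rightarrow> nat \<Rightarrow> nat \<Rightarrow> nat \<Rightarrow> bool" where
  "nilpotency_rel q f n K b c \<longleftrightarrow>
    nilpotency_cond q f n K (fst (prod_decode b)) (snd (prod_decode b))
      (fst (prod_decode c)) (fst (prod_decode (snd (prod_decode c)))) (snd (prod_decode (snd (prod_decode c))))"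

lemma ex_all_nilpotency_rel_iff:
  "(\<exists>b. \<forall>c. nilpotency_rel q f n K b c) \<longleftrightarrow> (\<exists>s T. \<forall>t x i. nilpotency_cond q f n K s T t x i)"
  unfolding nilpotency_rel_def
  by (metis fst_conv prod_encode_inverse snd_conv)

lemma valid_ca_iff_codes:
  "valid_ca q n \<longleftrightarrow> code_length (snd (prod_decode n)) = q ^ (2 * ca_radius n + 1) \<and>
    (\<forall>i < code_length (snd (prod_decode n)). code_nth (snd (prod_decode n)) i < q)"
  unfolding valid_ca_def words_def ca_table_def code_length_eq
  by (auto simp: code_nth_eq all_set_conv_all_nth)

lemma valid_ca_of_nilpotency_cond: "(\<And>i. nilpotency_cond q f n K s T t x i) \<Longrightarrow> valid_ca q n"
  unfolding valid_ca_iff_codes nilpotency_cond_def by blast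

lemma LIMSEQ_zero_of_less_inverse_Suc:
  fixes a :: "nat \<Rightarrow> real"
  assumes "\<And>t. 0 \<le> a t" and "\<And>K. \<exists>T. \<forall>t\<ge>T. a t < 1 / real (K + 1)"
  shows "a \<longlonglongrightarrow> 0"
proof (rule LIMSEQ_I)
  fix r :: real
  assume "0 < r"
  then obtain K where K: "1 / real (K + 1) < r"
    by (metis Suc_eq_plus1 nat_approx_posE)
  obtain T where "\<forall>t\<ge>T. a t < 1 / real (K + 1)"
    using assms(2) by blast
  then show "\<exists>T. \<forall>t\<ge>T. norm (a t - 0) < r"
    using K assms(1) by (metis abs_of_nonneg diff_zero less_trans real_norm_def)
qed

text \<open>If no single \<open>s\<close> works, each \<open>s < q\<close> fails at some \<open>K\<^sub>s\<close>, so every \<open>s\<close> fails at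
  \<open>\<Sum>\<^sub>s K\<^sub>s\<close>.\<close>

lemma ex_uniform_choice:
  fixes P :: "nat \<Rightarrow> nat \<Rightarrow> bool"
  assumes ex: "\<And>K. \<exists>s<q. P K s" and mono: "\<And>K K' s. K \<le> K' \<Longrightarrow> P K' s \<Longrightarrow> P K s"
  shows "\<exists>s<q. \<forall>K. P K s"
proof (rule ccontr)
  assume "\<not> ?thesis"
  then obtain Kf where Kf: "\<And>s. s < q \<Longrightarrow> \<not> P (Kf s) s"
    by metis
  obtain s where s: "s < q" "P (\<Sum>s<q. Kf s) s"
    using ex by blast
  have "Kf s \<le> (\<Sum>s<q. Kf s)"
    using s(1) by (intro member_le_sum) auto
  then show False
    using Kf s mono by blast
qed

context
  fixes q n :: nat and \<mu> :: "(int \<Rightarrow> nat) measure" and f :: "nat \<Rightarrow> nat"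
  assumes si: "shift_invariant_prob q \<mu>" and v: "valid_ca q n" and f: "cyl_approximation q \<mu> f"
begin

lemma nilpotency_cond_of_mu_nilpotent:
  assumes "mu_nilpotent q \<mu> n"
  shows "\<exists>s T. \<forall>t x i. nilpotency_cond q f n K s T t x i"
proof -
  obtain s where s: "s < q"
    and lim: "\<And>x. x < q \<Longrightarrow> x \<noteq> s \<Longrightarrow> (\<lambda>t. letter_prob q \<mu> n t x) \<longlonglongrightarrow> 0"
    using assms unfolding mu_nilpotent_iff_letters_vanish[OF si v] by auto
  let ?e = "1 / (4 * real (K + 1))"
  have "\<exists>T. \<forall>t\<ge>T. x < q \<and> x \<noteq> s \<longrightarrow> letter_prob q \<mu> n t x \<le> ?e" for x
  proof (cases "x < q \<and> x \<noteq> s")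
    case True
    then have "(\<lambda>t. letter_prob q \<mu> n t x) \<longlonglongrightarrow> 0"
      by (intro lim) auto
    moreover have "0 < ?e"
      by simp
    ultimately obtain T where "\<forall>t\<ge>T. norm (letter_prob q \<mu> n t x - 0) < ?e"
      by (blast dest: LIMSEQ_D)
    then show ?thesis
      by (auto intro!: exI[of _ T])
  qed auto
  then obtain Tf where Tf: "\<And>x t. x < q \<Longrightarrow> x \<noteq> s \<Longrightarrow> Tf x \<le> t \<Longrightarrow> letter_prob q \<mu> n t x \<le> ?e"
    by metis
  have "nilpotency_cond q f n K s (\<Sum>x<q. Tf x) t x i" for t x i
  proof -
    have "small_letter_test q f n t x K" if "(\<Sum>x<q. Tf x) \<le> t" "x < q" "x \<noteq> s"
    proof (rule small_letter_test_complete[OF si v f])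
      have "Tf x \<le> (\<Sum>x<q. Tf x)"
        using that(2) by (intro member_le_sum) auto
      then show "letter_prob q \<mu> n t x \<le> ?e"
        using Tf that by auto
    qed
    then show ?thesis
      using v s unfolding nilpotency_cond_def valid_ca_iff_codes by auto
  qed
  then show ?thesis
    by blast
qed

lemma mu_nilpotent_of_nilpotency_cond:
  assumes cond: "\<And>K. \<exists>s T. \<forall>t x i. nilpotency_cond q f n K s T t x i"
  shows "mu_nilpotent q \<mu> n"
proof -
  let ?P = "\<lambda>K s. \<exists>T. \<forall>t\<ge>T. \<forall>x<q. x \<noteq> s \<longrightarrow> letter_prob q \<mu> n t x < 1 / real (K + 1)"
  have "\<exists>s<q. ?P K s" for K
  proof -
    obtain s T where c: "\<And>t x i. nilpotency_cond q f n K s T t x i"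
      using cond by blast
    then have "s < q"
      unfolding nilpotency_cond_def by blast
    moreover have "letter_prob q \<mu> n t x < 1 / real (K + 1)" if "T \<le> t" "x < q" "x \<noteq> s" for t x
      using c[of t x 0] that by (intro small_letter_test_sound[OF si v f]) (simp add: nilpotency_cond_def)
    ultimately show ?thesis
      by blast
  qed
  moreover have "?P K s" if "K \<le> K'" "?P K' s" for K K' s
  proof -
    have "1 / real (K' + 1) \<le> 1 / real (K + 1)"
      using that(1) by (intro divide_left_mono) auto
    then show ?thesis
      using that(2) by (meson less_le_trans)
  qed
  ultimately obtain s where s: "s < q" and P: "\<And>K. ?P K s"
    using ex_uniform_choice[of q ?P] by blast
  have "(\<lambda>t. letter_prob q \<mu> n t x) \<longlonglongrightarrow> 0" if "x < q" "x \<noteq> s" for x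
  proof (rule LIMSEQ_zero_of_less_inverse_Suc)
    show "\<exists>T. \<forall>t\<ge>T. letter_prob q \<mu> n t x < 1 / real (K + 1)" for K
      using P[of K] that by blast
  qed (simp add: letter_prob_def)
  then show ?thesis
    unfolding mu_nilpotent_iff_letters_vanish[OF si v] using s by blast
qed

end

lemma nilpotent_ca_iff_nilpotency_rel:
  assumes si: "shift_invariant_prob q \<mu>" and f: "cyl_approximation q \<mu> f"
  shows "valid_ca q n \<and> mu_nilpotent q \<mu> n \<longleftrightarrow> (\<forall>K. \<exists>b. \<forall>c. nilpotency_rel q f n K b c)"
  unfolding ex_all_nilpotency_rel_iff
  using nilpotency_cond_of_mu_nilpotent[OF si _ f] mu_nilpotent_of_nilpotency_cond[OF si _ f]
    valid_ca_of_nilpotency_cond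
  by metis

section \<open>Decidability of the \<open>\<Pi>\<^sub>3\<close> matrix\<close>

lemma mu_recursive_ca_radius: "mu_recursive k f \<Longrightarrow> mu_recursive k (\<lambda>xs. ca_radius (f xs))"
  unfolding ca_radius_def by (rule mu_recursive_fst_prod_decode)

lemma mu_recursive_step_code:
  "mu_recursive k A \<Longrightarrow> mu_recursive k B \<Longrightarrow> mu_recursive k C \<Longrightarrow>
    mu_recursive k (\<lambda>xs. step_code q (A xs) (B xs) (C xs))"
proof (rule mu_recursive_compose3[where h = "step_code q"])
  show "mu_recursive 3 (\<lambda>ys. step_code q (ys ! 0) (ys ! 1) (ys ! 2))"
    unfolding step_code_def
  proof (rule mu_recursive_sumI[where H = "\<lambda>ws. code_nth (snd (prod_decode (ws ! 1)))
        (ws ! 3 div q ^ ws ! 0 mod q ^ (2 * ca_radius (ws ! 1) + 1)) * q ^ ws ! 0"])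
    show "mu_recursive (Suc 3) (\<lambda>ws. code_nth (snd (prod_decode (ws ! 1)))
        (ws ! 3 div q ^ ws ! 0 mod q ^ (2 * ca_radius (ws ! 1) + 1)) * q ^ ws ! 0)"
      by (intro mu_recursive_mult mu_recursive_code_nth mu_recursive_snd_prod_decode
          mu_recursive_ca_radius mu_recursive_mod mu_recursive_div mu_recursive_power mu_recursive_add
          mu_recursive_const mu_recursive_proj) auto
    show "mu_recursive 3 (\<lambda>ys. ys ! 1)"
      by (rule mu_recursive_proj) simp
  qed (auto simp: length_Suc_conv numeral_eq_Suc)
qed

lemma mu_recursive_iter_code:
  "mu_recursive k A \<Longrightarrow> mu_recursive k B \<Longrightarrow> mu_recursive k C \<Longrightarrow>
    mu_recursive k (\<lambda>xs. iter_code q (A xs) (B xs) (C xs))"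
proof (rule mu_recursive_compose3[where h = "iter_code q"])
  show "mu_recursive 3 (\<lambda>ys. iter_code q (ys ! 0) (ys ! 1) (ys ! 2))"
    unfolding iter_code_def
    by (rule mu_recursive_rec_natI[where f = "\<lambda>xs. xs ! 2" and e = "\<lambda>xs. xs ! 1"
          and G = "\<lambda>s acc xs. step_code q (xs ! 0) (2 * ca_radius (xs ! 0) * (xs ! 1 - Suc s) + 1) acc"
          and H = "\<lambda>ws. step_code q (ws ! 2) (2 * ca_radius (ws ! 2) * (ws ! 3 - Suc (ws ! 0)) + 1) (ws ! 1)"])
      (auto intro!: mu_recursive_step_code mu_recursive_add mu_recursive_mult mu_recursive_minus
        mu_recursive_Suc mu_recursive_ca_radius mu_recursive_const mu_recursive_proj)
qed

lemma mu_recursive_digits_code: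
  "mu_recursive k A \<Longrightarrow> mu_recursive k B \<Longrightarrow> mu_recursive k (\<lambda>xs. digits_code q (A xs) (B xs))"
proof (rule mu_recursive_compose2[where h = "digits_code q"])
  show "mu_recursive 2 (\<lambda>ys. digits_code q (ys ! 0) (ys ! 1))"
    unfolding digits_code_def
    by (rule mu_recursive_rec_natI[where f = "\<lambda>_. 0" and e = "\<lambda>xs. xs ! 0"
          and G = "\<lambda>p acc xs. Suc (prod_encode (xs ! 1 div q ^ p mod q, acc))"
          and H = "\<lambda>ws. Suc (prod_encode (ws ! 3 div q ^ ws ! 0 mod q, ws ! 1))"])
      (auto intro!: mu_recursive_Suc mu_recursive_prod_encode mu_recursive_mod mu_recursive_div
        mu_recursive_power mu_recursive_const mu_recursive_proj mu_recursive_zero)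
qed

lemma mu_recursive_scaled_floor:
  "mu_recursive k A \<Longrightarrow> mu_recursive k B \<Longrightarrow> mu_recursive k (\<lambda>xs. scaled_floor (A xs) (B xs))"
  unfolding scaled_floor_def
  by (intro mu_recursive_If mu_recursive_pred_eq mu_recursive_mod mu_recursive_div mu_recursive_mult
      mu_recursive_add mu_recursive_fst_prod_decode mu_recursive_snd_prod_decode mu_recursive_const)

lemma mu_recursive_test_scale:
  "mu_recursive k A \<Longrightarrow> mu_recursive k B \<Longrightarrow> mu_recursive k C \<Longrightarrow>
    mu_recursive k (\<lambda>xs. test_scale q (A xs) (B xs) (C xs))"
  unfolding test_scale_def
  by (intro mu_recursive_mult mu_recursive_add mu_recursive_power mu_recursive_ca_radius mu_recursive_const)

lemma mu_recursive_cyl_approx: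
  "computable f \<Longrightarrow> mu_recursive k A \<Longrightarrow> mu_recursive k B \<Longrightarrow> mu_recursive k C \<Longrightarrow>
    mu_recursive k D \<Longrightarrow> mu_recursive k (\<lambda>xs. cyl_approx q f (A xs) (B xs) (C xs) (D xs))"
  unfolding cyl_approx_def
  by (intro mu_recursive_computable_comp[where h = f] mu_recursive_prod_encode mu_recursive_digits_code
      mu_recursive_add mu_recursive_mult mu_recursive_ca_radius mu_recursive_const mu_recursive_minus
      mu_recursive_test_scale)

lemma mu_recursive_preimage_approx:
  assumes "computable f"
  shows "mu_recursive k A \<Longrightarrow> mu_recursive k B \<Longrightarrow> mu_recursive k C \<Longrightarrow> mu_recursive k D \<Longrightarrow>
    mu_recursive k (\<lambda>xs. preimage_approx q f (A xs) (B xs) (C xs) (D xs))"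
proof (rule mu_recursive_compose4[where h = "preimage_approx q f"])
  show "mu_recursive 4 (\<lambda>ys. preimage_approx q f (ys ! 0) (ys ! 1) (ys ! 2) (ys ! 3))"
    unfolding preimage_approx_def
  proof (rule mu_recursive_sumI[where H = "\<lambda>ws. if iter_code q (ws ! 1) (ws ! 2) (ws ! 0) = ws ! 3
      then scaled_floor (test_scale q (ws ! 1) (ws ! 2) (ws ! 4)) (cyl_approx q f (ws ! 1) (ws ! 2) (ws ! 4) (ws ! 0))
      else 0"])
    show "mu_recursive (Suc 4) (\<lambda>ws. if iter_code q (ws ! 1) (ws ! 2) (ws ! 0) = ws ! 3
      then scaled_floor (test_scale q (ws ! 1) (ws ! 2) (ws ! 4)) (cyl_approx q f (ws ! 1) (ws ! 2) (ws ! 4) (ws ! 0))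
      else 0)"
      by (intro mu_recursive_If mu_recursive_pred_eq mu_recursive_iter_code mu_recursive_scaled_floor
          mu_recursive_test_scale mu_recursive_cyl_approx[OF assms] mu_recursive_const mu_recursive_proj)
        auto
    show "mu_recursive 4 (\<lambda>ys. q ^ (2 * ca_radius (ys ! 0) * ys ! 1 + 1))"
      by (intro mu_recursive_power mu_recursive_add mu_recursive_mult mu_recursive_ca_radius
          mu_recursive_const mu_recursive_proj) auto
  qed (auto simp: length_Suc_conv numeral_eq_Suc)
qed

lemma decidable4_nilpotency_rel:
  assumes "computable f"
  shows "decidable4 (nilpotency_rel q f)"
proof (rule decidable4I)
  show "mu_recursive_pred 4 (\<lambda>xs. nilpotency_rel q f (xs ! 0) (xs ! 1) (xs ! 2) (xs ! 3))"
    unfolding nilpotency_rel_def nilpotency_cond_def small_letter_test_def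
    by (intro mu_recursive_pred_conj mu_recursive_pred_imp mu_recursive_pred_eq mu_recursive_pred_less
        mu_recursive_pred_le mu_recursive_pred_not mu_recursive_preimage_approx[OF assms]
        mu_recursive_test_scale mu_recursive_code_length mu_recursive_code_nth mu_recursive_power
        mu_recursive_ca_radius mu_recursive_add mu_recursive_mult mu_recursive_fst_prod_decode
        mu_recursive_snd_prod_decode mu_recursive_const mu_recursive_proj) auto
qed

theorem proposition5:
  fixes q :: nat and \<mu> :: "(int \<Rightarrow> nat) measure"
  assumes "q \<ge> 1"
    and "shift_invariant_prob q \<mu>"
    and "computable_measure q \<mu>"
  shows "Pi3 {n. valid_ca q n \<and> mu_nilpotent q \<mu> n}"
proof -
  obtain f where "computable f" and "cyl_approximation q \<mu> f"
    using assms(3) unfolding computable_measure_def cyl_approximation_def by blast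
  then show ?thesis
    unfolding Pi3_def
    using decidable4_nilpotency_rel nilpotent_ca_iff_nilpotency_rel[OF assms(2)] by blast
qed

end
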